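(* Let $v,a,b,c\in\mathbb{C}$ with $\Re(v)<1$, $\Re(c)>0$, and $\Re(vc+a+b)>0$, $\Re(vc+a-b)>0$, $\Re(vc-a+b)>0$, $\Re(vc-a-b)>0$. Fix a square root $\sqrt{a^2+b^2}$ and put $\lambda_1=\frac v2-\frac{\sqrt{a^2+b^2}}{2c}$, $\lambda_2=\frac v2+\frac{\sqrt{a^2+b^2}}{2c}$, $\sigma_3=\frac v2-\frac{a}{2c}-\frac{b}{2c}$, $\sigma_4=\frac v2-\frac{a}{2c}+\frac{b}{2c}$, $\sigma_5=\frac v2+\frac{a}{2c}+\frac{b}{2c}$, $\sigma_6=\frac v2+\frac{a}{2c}-\frac{b}{2c}$, $P=(vc-a-b)(vc+a+b)(vc-a+b)(vc+a-b)$; assume $\frac v2,\lambda_1,\lambda_2\notin\mathbb{Z}_0^-$ and $1+\sigma_j\notin\mathbb{Z}_0^-$ ($j=3,4,5,6$). Then $$ \int_0^\infty\frac{\cosh(ax)\cosh(bx)}{\sinh^{v}(cx)}\,dx=\frac{2^{v}(v^3c^3-a^2vc-b^2vc)}{P}\;{}_8F_7\!\left(\begin{matrix}v,\ 1+\frac v2,\ 1+\lambda_1,\ 1+\lambda_2,\ \sigma_3,\ \sigma_4,\ \sigma_5,\ \sigma_6\\ \frac v2,\ \lambda_1,\ \lambda_2,\ 1+\sigma_3,\ 1+\sigma_4,\ 1+\sigma_5,\ 1+\sigma_6\end{matrix};\,1\right). $$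
   Context: $\mathbb{Z}_0^-=\{0,-1,-2,\dots\}$. The Pochhammer symbol is $(\lambda)_0=1$, $(\lambda)_n=\lambda(\lambda+1)\cdots(\lambda+n-1)$ for $n\ge1$. The generalized hypergeometric series is ${}_pF_q\!\left(\begin{matrix}\alpha_1,\dots,\alpha_p\\ \beta_1,\dots,\beta_q\end{matrix};z\right)=\sum_{n=0}^\infty\frac{(\alpha_1)_n\cdots(\alpha_p)_n}{(\beta_1)_n\cdots(\beta_q)_n}\frac{z^n}{n!}$ (with no $\beta_j\in\mathbb{Z}_0^-$); when $p=q+1$ and $z=1$ it converges if $\Re(\sum\beta_j-\sum\alpha_i)>0$. For $\Re(c)>0$ and $x>0$, the complex power $\sinh^{v}(cx)$ means $2^{-v}e^{vcx}(1-e^{-2cx})^{v}$, with the principal branch of $(1-e^{-2cx})^{v}$ (this agrees with the ordinary real power when $c>0$ and $v$ is real). *)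

theory Defs
  imports "HOL-Analysis.Analysis"
begin

definition hyp_term :: "complex list \<Rightarrow> complex list \<Rightarrow> complex \<Rightarrow> nat \<Rightarrow> complex" where
  "hyp_term as bs z n =
     prod_list (map (\<lambda>a. pochhammer a n) as) / prod_list (map (\<lambda>b. pochhammer b n) bs)
       * z ^ n / of_nat (fact n)"

definition hypergeomF :: "complex list \<Rightarrow> complex list \<Rightarrow> complex \<Rightarrow> complex" where
  "hypergeomF as bs z = (\<Sum>n. hyp_term as bs z n)"

text \<open>Complex power sinh^v(c x) := 2^(-v) e^(v c x) (1 - e^(-2 c x))^v, principal branch.\<close>
definition sinh_pow :: "complex \<Rightarrow> complex \<Rightarrow> real \<Rightarrow> complex" where
  "sinh_pow v c x = (2::complex) powr (-v) * exp (v * c * of_real x)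
                      * (1 - exp (-2 * c * of_real x)) powr v"

end

theory Submission
  imports Defs
begin

(* Writing 4 cosh(ax) cosh(bx) e^(-vcx) as the sum of the four exponentials e^(-wx),
   w = vc -+ a -+ b, and expanding (1 - e^(-2cx))^(-v) = sum_n (v)_n/n! e^(-2cnx) by the binomial
   series, the integrand becomes 2^v/4 sum_n (v)_n/n! sum_w e^(-(2cn + w)x).  Integration term by
   term is justified by dominated convergence: (v)_n/n! = O(n^(Re v - 1)), so for Re v < 1 the
   integrated absolute series converges.  This gives 2^v/4 sum_n (v)_n/n! sum_w 1/(2cn + w).
   With t = 2c(n + v/2) and s^2 = a^2 + b^2, partial fractions turn sum_w 1/(t -+ a -+ b) into
   4t(t - s)(t + s) / prod_w (t -+ a -+ b), and every factor here, normalised by its value at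
   n = 0, is a quotient (l+1)_n/(l)_n or (sigma)_n/(sigma+1)_n of Pochhammer symbols:
   that is the n-th term of the 8F7 series. *)

lemma has_integral_exp_neg_real:
  fixes r :: real
  assumes "r > 0"
  shows "((\<lambda>x. exp (- (r * x))) has_integral 1 / r) {0<..}"
proof -
  have "((\<lambda>x. exp (- r * x)) has_integral exp (- r * 0) / r) {0..}"
    by (rule has_integral_exp_minus_to_infinity[OF assms])
  then show ?thesis
    by (subst has_integral_spike_set_eq[of _ "{0..}"])
       (auto intro: negligible_subset[OF negligible_sing[of 0]])
qed

lemma has_integral_exp_neg_complex:
  fixes w :: complex
  assumes "Re w > 0"
  shows "((\<lambda>x::real. exp (- (w * of_real x))) has_integral 1 / w) {0<..}"
proof (rule has_integral_dominated_convergence)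
  have w: "w \<noteq> 0"
    using assms by auto
  show "((\<lambda>x. if x \<in> {0<..real k} then exp (- (w * of_real x)) else 0) has_integral
          (1 - exp (- (w * of_real (real k)))) / w) {0<..}" for k
  proof -
    have "((\<lambda>x. - exp (- (w * x)) / w) has_vector_derivative exp (- (w * t))) (at t within {0..real k})" for t
      using w by (intro derivative_eq_intros has_complex_derivative_imp_has_vector_derivative[unfolded o_def] | simp)+
    then have "((\<lambda>x. exp (- (w * of_real x))) has_integral
                  - exp (- (w * of_real (real k))) / w - (- exp (- (w * of_real 0)) / w)) {0..real k}"
      by (intro fundamental_theorem_of_calculus) auto
    then have "((\<lambda>x. exp (- (w * of_real x))) has_integral (1 - exp (- (w * of_real (real k)))) / w) {0<..real k}"
      by (subst has_integral_spike_set_eq[of _ "{0..real k}"])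
         (auto intro: negligible_subset[OF negligible_sing[of 0]] simp: diff_divide_distrib)
    then show ?thesis
      by (subst has_integral_restrict) auto
  qed
  show "(\<lambda>x. exp (- (Re w * x))) integrable_on {0<..}"
    using has_integral_exp_neg_real[OF assms] by blast
  show "\<forall>x\<in>{0<..}. norm (if x \<in> {0<..real k} then exp (- (w * of_real x)) else 0) \<le> exp (- (Re w * x))" for k
    by auto
  show "\<forall>x\<in>{0<..}. (\<lambda>k. if x \<in> {0<..real k} then exp (- (w * of_real x)) else 0) \<longlonglongrightarrow> exp (- (w * of_real x))"
  proof
    fix x :: real
    assume "x \<in> {0<..}"
    then have "\<forall>\<^sub>F k in sequentially. (if x \<in> {0<..real k} then exp (- (w * of_real x)) else 0) = exp (- (w * of_real x))"
      by (auto intro: eventually_sequentiallyI[of "nat \<lceil>x\<rceil>"])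
    then show "(\<lambda>k. if x \<in> {0<..real k} then exp (- (w * of_real x)) else 0) \<longlonglongrightarrow> exp (- (w * of_real x))"
      by (rule tendsto_eventually)
  qed
  have "(\<lambda>k. exp (- (Re w * real k))) \<longlonglongrightarrow> 0"
    using assms by real_asymp
  then have "(\<lambda>k. exp (- (w * of_real (real k)))) \<longlonglongrightarrow> 0"
    by (subst tendsto_norm_zero_iff[symmetric]) simp
  from tendsto_divide[OF tendsto_diff[OF tendsto_const[of 1] this] tendsto_const[of w]] w
  show "(\<lambda>k. (1 - exp (- (w * of_real (real k)))) / w) \<longlonglongrightarrow> 1 / w"
    by simp
qed

lemma has_integral_suminf_dominated:
  fixes f :: "nat \<Rightarrow> 'a::euclidean_space \<Rightarrow> 'b::euclidean_space"
    and g :: "nat \<Rightarrow> 'a \<Rightarrow> real"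
  assumes f: "\<And>n. (f n has_integral I n) S"
    and g: "\<And>n. (g n has_integral J n) S"
    and f_le_g: "\<And>n x. x \<in> S \<Longrightarrow> norm (f n x) \<le> g n x"
    and g_summable: "\<And>x. x \<in> S \<Longrightarrow> summable (\<lambda>n. g n x)"
    and J_summable: "summable J"
  shows "summable I" and "((\<lambda>x. \<Sum>n. f n x) has_integral (\<Sum>n. I n)) S"
proof -
  have g_nonneg: "0 \<le> g n x" if "x \<in> S" for n x
    using f_le_g[OF that] norm_ge_zero order_trans by blast
  have I_le_J: "norm (I n) \<le> J n" for n
  proof -
    have "norm (integral S (f n)) \<le> integral S (g n)"
      using f g f_le_g by (intro integral_norm_bound_integral) auto
    then show ?thesis
      by (simp add: integral_unique[OF f] integral_unique[OF g])
  qed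
  then show I_summable: "summable I"
    using J_summable by (metis summable_comparison_test')
  have partial_g: "((\<lambda>x. \<Sum>n<k. g n x) has_integral (\<Sum>n<k. J n)) S" for k
    using g by (rule has_integral_sum[OF finite_lessThan])
  have "((\<lambda>x. \<Sum>n. g n x) has_integral (\<Sum>n. J n)) S"
    using partial_g
  proof (rule has_integral_monotone_convergence_increasing)
    show "(\<Sum>n<k. g n x) \<le> (\<Sum>n<Suc k. g n x)" if "x \<in> S" for k x
      using g_nonneg[OF that] by simp
    show "(\<lambda>k. \<Sum>n<k. g n x) \<longlonglongrightarrow> (\<Sum>n. g n x)" if "x \<in> S" for x
      using g_summable[OF that] by (rule summable_LIMSEQ)
    show "(\<lambda>k. \<Sum>n<k. J n) \<longlonglongrightarrow> (\<Sum>n. J n)"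
      using J_summable by (rule summable_LIMSEQ)
  qed
  then have G_integrable: "(\<lambda>x. \<Sum>n. g n x) integrable_on S"
    by blast
  show "((\<lambda>x. \<Sum>n. f n x) has_integral (\<Sum>n. I n)) S"
  proof (rule has_integral_dominated_convergence[OF _ G_integrable])
    show "((\<lambda>x. \<Sum>n<k. f n x) has_integral (\<Sum>n<k. I n)) S" for k
      using f by (rule has_integral_sum[OF finite_lessThan])
    show "\<forall>x\<in>S. norm (\<Sum>n<k. f n x) \<le> (\<Sum>n. g n x)" for k
    proof
      fix x
      assume x: "x \<in> S"
      have "norm (\<Sum>n<k. f n x) \<le> (\<Sum>n<k. g n x)"
        using f_le_g[OF x] by (intro sum_norm_le) auto
      also have "\<dots> \<le> (\<Sum>n. g n x)"
        using g_summable[OF x] g_nonneg[OF x] by (intro sum_le_suminf) auto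
      finally show "norm (\<Sum>n<k. f n x) \<le> (\<Sum>n. g n x)" .
    qed
    show "\<forall>x\<in>S. (\<lambda>k. \<Sum>n<k. f n x) \<longlonglongrightarrow> (\<Sum>n. f n x)"
    proof
      fix x
      assume x: "x \<in> S"
      have "summable (\<lambda>n. f n x)"
        using g_summable[OF x] f_le_g[OF x] by (rule summable_comparison_test')
      then show "(\<lambda>k. \<Sum>n<k. f n x) \<longlonglongrightarrow> (\<Sum>n. f n x)"
        by (rule summable_LIMSEQ)
    qed
    show "(\<lambda>k. \<Sum>n<k. I n) \<longlonglongrightarrow> (\<Sum>n. I n)"
      using I_summable by (rule summable_LIMSEQ)
  qed
qed

lemma norm_pochhammer_div_fact_le:
  fixes v :: complex
  obtains B where "B > 0"
    and "\<And>m. m \<ge> 1 \<Longrightarrow> norm (pochhammer v (Suc m) / fact (Suc m)) \<le> B * real m powr (Re v - 1)"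
proof -
  \<comment> \<open>\<open>rGamma_series v m = (v)\<^sub>m\<^sub>+\<^sub>1 / (m! m\<^sup>v)\<close> converges to \<open>1 / \<Gamma>(v)\<close>, hence is bounded\<close>
  have "Bseq (rGamma_series v)"
    using rGamma_series_LIMSEQ[of v] by (intro convergent_imp_Bseq) (auto simp: convergent_def)
  then obtain K where K: "K > 0" "\<And>m. norm (rGamma_series v m) \<le> K"
    by (auto simp: Bseq_def)
  have "norm (pochhammer v (Suc m) / fact (Suc m)) \<le> K * real m powr (Re v - 1)" if m: "m \<ge> 1" for m
  proof -
    have m_pos: "real m > 0"
      using m by simp
    have "pochhammer v (Suc m) = rGamma_series v m * (fact m * exp (v * of_real (ln (of_nat m))))"
      by (simp add: rGamma_series_def)
    moreover have "norm (exp (v * of_real (ln (real m)))) = real m powr Re v"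
      using m_pos by (simp add: powr_def)
    ultimately have "norm (pochhammer v (Suc m)) = norm (rGamma_series v m) * (fact m * real m powr Re v)"
      by (simp add: norm_mult)
    also have "\<dots> \<le> K * (fact m * real m powr Re v)"
      by (intro mult_right_mono K) simp
    finally have "norm (pochhammer v (Suc m) / fact (Suc m)) \<le> K * (fact m * real m powr Re v) / fact (Suc m)"
      by (simp add: norm_divide divide_right_mono del: fact_Suc)
    also have "\<dots> = K * real m powr Re v / (real m + 1)"
    proof -
      have "(fact (Suc m) :: real) = (real m + 1) * fact m"
        by simp
      then show ?thesis
        by (simp del: fact_Suc)
    qed
    also have "\<dots> \<le> K * real m powr Re v / real m"
      using K m_pos by (intro divide_left_mono) auto
    also have "\<dots> = K * real m powr (Re v - 1)"
      using m_pos by (simp add: powr_diff)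
    finally show ?thesis .
  qed
  with K that show ?thesis
    by blast
qed

lemma pochhammer_exp_series_has_integral:
  fixes v c w :: complex
  assumes v: "Re v < 1" and c: "Re c > 0" and w: "Re w > 0"
  defines "W \<equiv> \<lambda>n. 2 * c * of_nat n + w"
  shows "summable (\<lambda>n. pochhammer v n / fact n / W n)"
    and "((\<lambda>x::real. \<Sum>n. pochhammer v n / fact n * exp (- (W n * of_real x)))
           has_integral (\<Sum>n. pochhammer v n / fact n / W n)) {0<..}"
proof -
  define p where "p n = pochhammer v n / fact n" for n
  have Re_W: "Re (W n) = 2 * Re c * real n + Re w" for n
    by (simp add: W_def)
  have Re_W_pos: "Re (W n) > 0" for n
    using c w by (simp add: Re_W add_nonneg_pos)
  obtain B where B: "B > 0" "\<And>m. m \<ge> 1 \<Longrightarrow> norm (p (Suc m)) \<le> B * real m powr (Re v - 1)"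
    unfolding p_def by (rule norm_pochhammer_div_fact_le[of v]) blast
  define B' where "B' = B + 1 + norm v"
  have B'_nonneg: "B' \<ge> 0"
    using B by (simp add: B'_def)
  have p_bounded: "norm (p n) \<le> B'" for n
  proof (cases "n \<ge> 2")
    case True
    then obtain m where m: "n = Suc m" "m \<ge> 1"
      by (cases n) auto
    have "real m powr (Re v - 1) \<le> 1"
      using m v powr_mono[of "Re v - 1" 0 "real m"] by simp
    then have "B * real m powr (Re v - 1) \<le> B"
      using B by (simp add: mult_left_le)
    then have "norm (p n) \<le> B"
      using B m by (meson order_trans)
    then show ?thesis
      unfolding B'_def using norm_ge_zero[of v] by linarith
  next
    case False
    then have "n = 0 \<or> n = 1"
      by auto
    then show ?thesis
      using B by (auto simp: p_def B'_def)
  qed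
  have J_summable: "summable (\<lambda>n. norm (p n) / Re (W n))"
  proof -
    have "summable (\<lambda>m. real m powr (Re v - 2))"
      using v by (simp add: summable_real_powr_iff)
    then have majorant: "summable (\<lambda>m. B / (2 * Re c) * real m powr (Re v - 2))"
      by (rule summable_mult)
    have "norm (norm (p (Suc m)) / Re (W (Suc m))) \<le> B / (2 * Re c) * real m powr (Re v - 2)"
      if m: "m \<ge> 1" for m
    proof -
      have m_pos: "real m > 0"
        using m by simp
      have "2 * Re c * real m \<le> Re (W (Suc m))"
        using c w by (simp add: Re_W algebra_simps)
      then have "norm (p (Suc m)) / Re (W (Suc m)) \<le> B * real m powr (Re v - 1) / (2 * Re c * real m)"
        using B m c m_pos by (intro frac_le) auto
      also have "real m powr (Re v - 1) = real m powr (Re v - 2) * real m"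
        using powr_add[of "real m" "Re v - 2" 1] by simp
      finally show ?thesis
        using m_pos Re_W_pos[of "Suc m"] by simp
    qed
    with majorant have "summable (\<lambda>m. norm (p (Suc m)) / Re (W (Suc m)))"
      by (rule summable_comparison_test')
    then show ?thesis
      using summable_Suc_iff[of "\<lambda>n. norm (p n) / Re (W n)"] by simp
  qed
  have g_summable: "summable (\<lambda>n. norm (p n) * exp (- (Re (W n) * x)))" if "x \<in> {0<..}" for x
  proof -
    have x: "x > 0"
      using that by simp
    define q where "q = exp (- (2 * Re c * x))"
    have "summable (\<lambda>n. q ^ n)"
      using c x by (intro summable_geometric) (simp add: q_def)
    then have majorant: "summable (\<lambda>n. B' * q ^ n)"
      by (rule summable_mult)
    have bound: "norm (norm (p n) * exp (- (Re (W n) * x))) \<le> B' * q ^ n" for n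
    proof -
      have "exp (- (Re (W n) * x)) \<le> q ^ n"
        using w x by (simp add: q_def Re_W algebra_simps flip: exp_of_nat_mult)
      then show ?thesis
        using p_bounded[of n] B'_nonneg by (auto intro!: mult_mono)
    qed
    from majorant show ?thesis
      by (rule summable_comparison_test') (rule bound)
  qed
  have f_int: "((\<lambda>x. p n * exp (- (W n * of_real x))) has_integral p n / W n) {0<..}" for n
    using has_integral_mult_right[OF has_integral_exp_neg_complex[OF Re_W_pos[of n]], of "p n"] by simp
  have g_int: "((\<lambda>x. norm (p n) * exp (- (Re (W n) * x))) has_integral norm (p n) / Re (W n)) {0<..}" for n
    using has_integral_mult_right[OF has_integral_exp_neg_real[OF Re_W_pos[of n]], of "norm (p n)"] by simp
  have f_le_g: "norm (p n * exp (- (W n * of_real x))) \<le> norm (p n) * exp (- (Re (W n) * x))" for n x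
    by (simp add: norm_mult)
  from has_integral_suminf_dominated[OF f_int g_int f_le_g g_summable J_summable]
  show "summable (\<lambda>n. pochhammer v n / fact n / W n)"
    and "((\<lambda>x::real. \<Sum>n. pochhammer v n / fact n * exp (- (W n * of_real x)))
           has_integral (\<Sum>n. pochhammer v n / fact n / W n)) {0<..}"
    by (simp_all add: p_def)
qed

lemma pochhammer_exp_series_sums:
  fixes v c w :: complex and x :: real
  assumes "Re c > 0" and "x > 0"
  shows "(\<lambda>n. pochhammer v n / fact n * exp (- ((2 * c * of_nat n + w) * of_real x)))
           sums (exp (- (w * of_real x)) * (1 - exp (-2 * c * of_real x)) powr (-v))"
proof -
  define z where "z = exp (-2 * c * of_real x)"
  have "norm (- z) < 1"
    using assms by (simp add: z_def)
  moreover have "(- v gchoose n) * (- z) ^ n = pochhammer v n / fact n * z ^ n" for n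
  proof -
    have "(- v gchoose n) * (- z) ^ n = ((- 1) ^ n * (- 1) ^ n) * (pochhammer v n / fact n * z ^ n)"
      by (subst power_minus) (simp add: gbinomial_pochhammer)
    also have "(- 1 :: complex) ^ n * (- 1) ^ n = 1"
      by (simp flip: power_add)
    finally show ?thesis
      by simp
  qed
  ultimately have "(\<lambda>n. pochhammer v n / fact n * z ^ n) sums (1 - z) powr (-v)"
    using gen_binomial_complex[of "- z" "- v"] by simp
  from sums_mult[OF this, of "exp (- (w * of_real x))"]
  show ?thesis
    by (simp add: z_def algebra_simps flip: exp_of_nat_mult exp_add)
qed

lemma cosh_mult_cosh_div_sinh_pow:
  fixes v a b c :: complex and x :: real
  defines "E \<equiv> \<lambda>w. exp (- (w * of_real x))"
  shows "cosh (a * of_real x) * cosh (b * of_real x) / sinh_pow v c x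
           = 2 powr v / 4 * (E (v * c - a - b) + E (v * c - a + b) + E (v * c + a + b) + E (v * c + a - b))
               * (1 - exp (-2 * c * of_real x)) powr (-v)"
proof -
  define X where "X = (of_real x :: complex)"
  have inverse_sinh_pow: "inverse (sinh_pow v c x) = 2 powr v * exp (- (v * c * X)) * (1 - exp (-2 * c * X)) powr (-v)"
    by (simp add: sinh_pow_def X_def powr_minus exp_minus)
  have E_split:
    "E (v * c - a - b) = exp (- (v * c * X)) * exp (a * X) * exp (b * X)"
    "E (v * c - a + b) = exp (- (v * c * X)) * exp (a * X) * exp (- (b * X))"
    "E (v * c + a + b) = exp (- (v * c * X)) * exp (- (a * X)) * exp (- (b * X))"
    "E (v * c + a - b) = exp (- (v * c * X)) * exp (- (a * X)) * exp (b * X)"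
    unfolding E_def X_def mult_exp_exp by (simp_all add: algebra_simps)
  have E_sum: "E (v * c - a - b) + E (v * c - a + b) + E (v * c + a + b) + E (v * c + a - b)
      = 4 * (cosh (a * X) * cosh (b * X)) * exp (- (v * c * X))"
    unfolding E_split cosh_field_def by (simp add: algebra_simps)
  show ?thesis
    unfolding X_def[symmetric] divide_inverse inverse_sinh_pow E_sum by (simp add: mult_ac)
qed

lemma has_integral_cosh_mult_cosh_div_sinh_pow:
  fixes v a b c :: complex
  assumes v: "Re v < 1" and c: "Re c > 0"
    and w: "Re (v * c - a - b) > 0" "Re (v * c - a + b) > 0" "Re (v * c + a + b) > 0" "Re (v * c + a - b) > 0"
  defines "D \<equiv> \<lambda>n. 1 / (2 * c * of_nat n + (v * c - a - b)) + 1 / (2 * c * of_nat n + (v * c - a + b))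
                  + 1 / (2 * c * of_nat n + (v * c + a + b)) + 1 / (2 * c * of_nat n + (v * c + a - b))"
  shows "summable (\<lambda>n. pochhammer v n / fact n * D n)"
    and "((\<lambda>x::real. cosh (a * of_real x) * cosh (b * of_real x) / sinh_pow v c x)
           has_integral 2 powr v / 4 * (\<Sum>n. pochhammer v n / fact n * D n)) {0<..}"
proof -
  define p where "p = (\<lambda>n. pochhammer v n / fact n)"
  define t where "t = (\<lambda>w n. p n / (2 * c * of_nat n + w))"
  define S where "S = (\<lambda>w x. \<Sum>n. p n * exp (- ((2 * c * of_nat n + w) * of_real x)))"
  have t_summable: "summable (t w)" and S_integral: "(S w has_integral (\<Sum>n. t w n)) {0<..}"
    if "Re w > 0" for w
    using pochhammer_exp_series_has_integral[OF v c that] unfolding p_def t_def S_def by blast+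
  have S_eq: "S w x = exp (- (w * of_real x)) * (1 - exp (-2 * c * of_real x)) powr (-v)"
    if "x \<in> {0<..}" for w x
    using that sums_unique[OF pochhammer_exp_series_sums[OF c, of x v w]] by (simp add: S_def p_def)
  have pD: "p n * D n = t (v * c - a - b) n + t (v * c - a + b) n + t (v * c + a + b) n + t (v * c + a - b) n" for n
    by (simp add: D_def t_def ring_distribs)
  have "(\<lambda>n. p n * D n) sums ((\<Sum>n. t (v * c - a - b) n) + (\<Sum>n. t (v * c - a + b) n)
      + (\<Sum>n. t (v * c + a + b) n) + (\<Sum>n. t (v * c + a - b) n))"
    unfolding pD by (intro sums_add summable_sums t_summable w)
  then have "summable (\<lambda>n. p n * D n)"
    and pD_suminf: "(\<Sum>n. p n * D n) = (\<Sum>n. t (v * c - a - b) n) + (\<Sum>n. t (v * c - a + b) n)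
      + (\<Sum>n. t (v * c + a + b) n) + (\<Sum>n. t (v * c + a - b) n)"
    by (simp_all add: sums_iff)
  then show "summable (\<lambda>n. pochhammer v n / fact n * D n)"
    by (simp add: p_def)
  have S_sum_integral: "((\<lambda>x. 2 powr v / 4 * (S (v * c - a - b) x + S (v * c - a + b) x + S (v * c + a + b) x + S (v * c + a - b) x))
      has_integral 2 powr v / 4 * ((\<Sum>n. t (v * c - a - b) n) + (\<Sum>n. t (v * c - a + b) n)
      + (\<Sum>n. t (v * c + a + b) n) + (\<Sum>n. t (v * c + a - b) n))) {0<..}"
    using S_integral[OF w(1)] S_integral[OF w(2)] S_integral[OF w(3)] S_integral[OF w(4)]
    by (intro has_integral_mult_right has_integral_add)
  have integrand: "cosh (a * of_real x) * cosh (b * of_real x) / sinh_pow v c x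
      = 2 powr v / 4 * (S (v * c - a - b) x + S (v * c - a + b) x + S (v * c + a + b) x + S (v * c + a - b) x)"
    if "x \<in> {0<..}" for x
    unfolding cosh_mult_cosh_div_sinh_pow S_eq[OF that] by (simp only: distrib_right mult.assoc)
  have "((\<lambda>x::real. cosh (a * of_real x) * cosh (b * of_real x) / sinh_pow v c x)
           has_integral 2 powr v / 4 * (\<Sum>n. p n * D n)) {0<..}"
    unfolding pD_suminf by (rule has_integral_eq[OF _ S_sum_integral]) (simp only: integrand)
  then show "((\<lambda>x::real. cosh (a * of_real x) * cosh (b * of_real x) / sinh_pow v c x)
           has_integral 2 powr v / 4 * (\<Sum>n. pochhammer v n / fact n * D n)) {0<..}"
    by (simp only: p_def)
qed

lemma pochhammer_one_plus:
  fixes x :: "'a::comm_semiring_1"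
  shows "x * pochhammer (1 + x) n = (x + of_nat n) * pochhammer x n"
  using pochhammer_rec[of x n] pochhammer_rec'[of x n] by (simp add: add.commute)

lemma pochhammer_one_plus_div_pochhammer:
  fixes x :: "'a::field"
  assumes "x \<noteq> 0" and "pochhammer x n \<noteq> 0"
  shows "pochhammer (1 + x) n / pochhammer x n = (x + of_nat n) / x"
  using assms pochhammer_one_plus[of x n] by (simp add: field_simps)

lemma pochhammer_div_pochhammer_one_plus:
  fixes x :: "'a::field"
  assumes "x \<noteq> 0" and "pochhammer (1 + x) n \<noteq> 0"
  shows "x + of_nat n \<noteq> 0" and "pochhammer x n / pochhammer (1 + x) n = x / (x + of_nat n)"
proof -
  show "x + of_nat n \<noteq> 0"
    using assms pochhammer_one_plus[of x n] by auto
  then show "pochhammer x n / pochhammer (1 + x) n = x / (x + of_nat n)"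
    using assms pochhammer_one_plus[of x n] by (simp add: field_simps)
qed

lemma sum_inverse_shifts_eq:
  fixes t a b s :: "'a::field"
  assumes "s\<^sup>2 = a\<^sup>2 + b\<^sup>2"
    and "t - a - b \<noteq> 0" "t - a + b \<noteq> 0" "t + a + b \<noteq> 0" "t + a - b \<noteq> 0"
  shows "1 / (t - a - b) + 1 / (t - a + b) + 1 / (t + a + b) + 1 / (t + a - b)
           = 4 * t * (t - s) * (t + s) / ((t - a - b) * (t - a + b) * (t + a + b) * (t + a - b))"
proof -
  define p1 p2 p3 p4 where "p1 = t - a - b" and "p2 = t - a + b" and "p3 = t + a + b" and "p4 = t + a - b"
  have "p2 * p3 * p4 + p1 * p3 * p4 + p1 * p2 * p4 + p1 * p2 * p3 = 4 * t * (t - s) * (t + s)"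
    unfolding p1_def p2_def p3_def p4_def using assms(1) by algebra
  moreover have "p1 \<noteq> 0" "p2 \<noteq> 0" "p3 \<noteq> 0" "p4 \<noteq> 0"
    using assms(2-5) by (simp_all add: p1_def p2_def p3_def p4_def)
  ultimately have "1 / p1 + 1 / p2 + 1 / p3 + 1 / p4 = 4 * t * (t - s) * (t + s) / (p1 * p2 * p3 * p4)"
    by (simp add: field_simps)
  then show ?thesis
    by (simp only: p1_def p2_def p3_def p4_def)
qed

lemma shifted_ratio_product_eq:
  fixes t u a b s :: "'a::field_char_0"
  assumes s: "s\<^sup>2 = a\<^sup>2 + b\<^sup>2" and u: "u \<noteq> 0" "u - s \<noteq> 0" "u + s \<noteq> 0"
    and t: "t - a - b \<noteq> 0" "t - a + b \<noteq> 0" "t + a + b \<noteq> 0" "t + a - b \<noteq> 0"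
  shows "t / u * ((t - s) / (u - s)) * ((t + s) / (u + s))
           * ((u - a - b) / (t - a - b)) * ((u - a + b) / (t - a + b))
           * ((u + a + b) / (t + a + b)) * ((u + a - b) / (t + a - b))
         = (u - a - b) * (u + a + b) * (u - a + b) * (u + a - b) / (4 * u * (u\<^sup>2 - s\<^sup>2))
           * (1 / (t - a - b) + 1 / (t - a + b) + 1 / (t + a + b) + 1 / (t + a - b))"
proof -
  \<comment> \<open>stated for fresh variables, so that \<open>field_simps\<close> only has to deal with monomials\<close>
  have cancel: "t / u * (tm / um) * (tp / up) * (r1 / q1) * (r2 / q2) * (r3 / q3) * (r4 / q4)
      = r1 * r3 * r2 * r4 / (4 * u * (um * up)) * (4 * t * tm * tp / (q1 * q2 * q3 * q4))"
    if "u \<noteq> 0" "um \<noteq> 0" "up \<noteq> 0" "q1 \<noteq> 0" "q2 \<noteq> 0" "q3 \<noteq> 0" "q4 \<noteq> 0"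
    for tm tp um up q1 q2 q3 q4 r1 r2 r3 r4 :: 'a
    using that by (simp add: field_simps)
  have "u\<^sup>2 - s\<^sup>2 = (u - s) * (u + s)"
    by (simp add: algebra_simps power2_eq_square)
  with cancel[OF u t] sum_inverse_shifts_eq[OF s t] show ?thesis
    by (simp only:)
qed

lemma hyp_term_Nil_Nil: "hyp_term [] [] z n = z ^ n / fact n"
  by (simp add: hyp_term_def)

lemma hyp_term_Cons_left: "hyp_term (a # as) bs z n = pochhammer a n * hyp_term as bs z n"
  by (simp add: hyp_term_def)

lemma hyp_term_Cons_Cons:
  "hyp_term (a # as) (b # bs) z n = pochhammer a n / pochhammer b n * hyp_term as bs z n"
  by (simp add: hyp_term_def mult.assoc)

lemma pochhammer_one_plus_div_pochhammer_affine:
  fixes v c e :: complex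
  assumes c: "c \<noteq> 0" and "v/2 + e/(2*c) \<notin> \<int>\<^sub>\<le>\<^sub>0"
  shows "pochhammer (1 + (v/2 + e/(2*c))) n / pochhammer (v/2 + e/(2*c)) n
           = (2 * c * of_nat n + v * c + e) / (v * c + e)"
proof -
  define x where "x = v/2 + e/(2*c)"
  have x_eq: "x = (v * c + e) / (2 * c)" and shifted: "x + of_nat n = (2 * c * of_nat n + v * c + e) / (2 * c)"
    using c by (simp_all add: x_def field_simps)
  have "x \<noteq> 0" and "pochhammer x n \<noteq> 0"
    using assms(2) by (auto simp: x_def pochhammer_eq_0_iff)
  then have "pochhammer (1 + x) n / pochhammer x n = (x + of_nat n) / x"
    by (rule pochhammer_one_plus_div_pochhammer)
  also have "\<dots> = ((2 * c * of_nat n + v * c + e) / (2 * c)) / ((v * c + e) / (2 * c))"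
    unfolding shifted by (simp only: x_eq)
  also have "\<dots> = (2 * c * of_nat n + v * c + e) / (v * c + e)"
    using c by simp
  finally show ?thesis
    unfolding x_def .
qed

lemma pochhammer_div_pochhammer_one_plus_affine:
  fixes v c e :: complex
  assumes c: "c \<noteq> 0" and "v * c + e \<noteq> 0" and "1 + (v/2 + e/(2*c)) \<notin> \<int>\<^sub>\<le>\<^sub>0"
  shows "2 * c * of_nat n + v * c + e \<noteq> 0"
    and "pochhammer (v/2 + e/(2*c)) n / pochhammer (1 + (v/2 + e/(2*c))) n
           = (v * c + e) / (2 * c * of_nat n + v * c + e)"
proof -
  define x where "x = v/2 + e/(2*c)"
  have x_eq: "x = (v * c + e) / (2 * c)" and shifted: "x + of_nat n = (2 * c * of_nat n + v * c + e) / (2 * c)"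
    using c by (simp_all add: x_def field_simps)
  have "x \<noteq> 0"
    using c assms(2) by (simp add: x_eq)
  moreover have "pochhammer (1 + x) n \<noteq> 0"
    using assms(3) by (auto simp: x_def pochhammer_eq_0_iff)
  note div = pochhammer_div_pochhammer_one_plus[OF \<open>x \<noteq> 0\<close> this]
  from div(1) show "2 * c * of_nat n + v * c + e \<noteq> 0"
    unfolding shifted by simp
  from div(2) c show "pochhammer (v/2 + e/(2*c)) n / pochhammer (1 + (v/2 + e/(2*c))) n
      = (v * c + e) / (2 * c * of_nat n + v * c + e)"
    unfolding shifted x_def[symmetric] by (simp add: x_eq)
qed

lemma hyp_term_8F7_ratio_form:
  fixes v a b c s :: complex and n :: nat
  assumes c: "c \<noteq> 0"
    and w: "v * c - a - b \<noteq> 0" "v * c - a + b \<noteq> 0" "v * c + a + b \<noteq> 0" "v * c + a - b \<noteq> 0"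
    and h: "v/2 \<notin> \<int>\<^sub>\<le>\<^sub>0"
    and l: "v/2 - s/(2*c) \<notin> \<int>\<^sub>\<le>\<^sub>0" "v/2 + s/(2*c) \<notin> \<int>\<^sub>\<le>\<^sub>0"
    and \<sigma>: "1 + (v/2 - a/(2*c) - b/(2*c)) \<notin> \<int>\<^sub>\<le>\<^sub>0" "1 + (v/2 - a/(2*c) + b/(2*c)) \<notin> \<int>\<^sub>\<le>\<^sub>0"
      "1 + (v/2 + a/(2*c) + b/(2*c)) \<notin> \<int>\<^sub>\<le>\<^sub>0" "1 + (v/2 + a/(2*c) - b/(2*c)) \<notin> \<int>\<^sub>\<le>\<^sub>0"
  defines "u \<equiv> v * c" and "T \<equiv> 2 * c * of_nat n + v * c"
  shows "T - a - b \<noteq> 0" "T - a + b \<noteq> 0" "T + a + b \<noteq> 0" "T + a - b \<noteq> 0"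
    and "hyp_term
           [v, 1 + v/2, 1 + (v/2 - s/(2*c)), 1 + (v/2 + s/(2*c)),
            v/2 - a/(2*c) - b/(2*c), v/2 - a/(2*c) + b/(2*c), v/2 + a/(2*c) + b/(2*c), v/2 + a/(2*c) - b/(2*c)]
           [v/2, v/2 - s/(2*c), v/2 + s/(2*c),
            1 + (v/2 - a/(2*c) - b/(2*c)), 1 + (v/2 - a/(2*c) + b/(2*c)),
            1 + (v/2 + a/(2*c) + b/(2*c)), 1 + (v/2 + a/(2*c) - b/(2*c))] 1 n
         = pochhammer v n * (1 / fact n)
             * (T / u * ((T - s) / (u - s)) * ((T + s) / (u + s))
                * ((u - a - b) / (T - a - b)) * ((u - a + b) / (T - a + b))
                * ((u + a + b) / (T + a + b)) * ((u + a - b) / (T + a - b)))"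
proof -
  note upper = pochhammer_one_plus_div_pochhammer_affine[OF c]
  note lower = pochhammer_div_pochhammer_one_plus_affine[OF c]
  have upper_ratios:
    "pochhammer (1 + v/2) n / pochhammer (v/2) n = T / u"
    "pochhammer (1 + (v/2 - s/(2*c))) n / pochhammer (v/2 - s/(2*c)) n = (T - s) / (u - s)"
    "pochhammer (1 + (v/2 + s/(2*c))) n / pochhammer (v/2 + s/(2*c)) n = (T + s) / (u + s)"
    using upper[of v 0] upper[of v "- s"] upper[of v s] h l
    by (simp_all add: u_def T_def diff_divide_distrib)
  have lower_ratios:
    "pochhammer (v/2 - a/(2*c) - b/(2*c)) n / pochhammer (1 + (v/2 - a/(2*c) - b/(2*c))) n
       = (u - a - b) / (T - a - b)"
    "pochhammer (v/2 - a/(2*c) + b/(2*c)) n / pochhammer (1 + (v/2 - a/(2*c) + b/(2*c))) n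
       = (u - a + b) / (T - a + b)"
    "pochhammer (v/2 + a/(2*c) + b/(2*c)) n / pochhammer (1 + (v/2 + a/(2*c) + b/(2*c))) n
       = (u + a + b) / (T + a + b)"
    "pochhammer (v/2 + a/(2*c) - b/(2*c)) n / pochhammer (1 + (v/2 + a/(2*c) - b/(2*c))) n
       = (u + a - b) / (T + a - b)"
    and "T - a - b \<noteq> 0" "T - a + b \<noteq> 0" "T + a + b \<noteq> 0" "T + a - b \<noteq> 0"
    using lower[of v "- a - b"] lower[of v "- a + b"] lower[of v "a + b"] lower[of v "a - b"] w \<sigma>
    by (simp_all add: u_def T_def add_divide_distrib diff_divide_distrib algebra_simps)
  then show "T - a - b \<noteq> 0" "T - a + b \<noteq> 0" "T + a + b \<noteq> 0" "T + a - b \<noteq> 0"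
    by blast+
  show "hyp_term
           [v, 1 + v/2, 1 + (v/2 - s/(2*c)), 1 + (v/2 + s/(2*c)),
            v/2 - a/(2*c) - b/(2*c), v/2 - a/(2*c) + b/(2*c), v/2 + a/(2*c) + b/(2*c), v/2 + a/(2*c) - b/(2*c)]
           [v/2, v/2 - s/(2*c), v/2 + s/(2*c),
            1 + (v/2 - a/(2*c) - b/(2*c)), 1 + (v/2 - a/(2*c) + b/(2*c)),
            1 + (v/2 + a/(2*c) + b/(2*c)), 1 + (v/2 + a/(2*c) - b/(2*c))] 1 n
         = pochhammer v n * (1 / fact n)
             * (T / u * ((T - s) / (u - s)) * ((T + s) / (u + s))
                * ((u - a - b) / (T - a - b)) * ((u - a + b) / (T - a + b))
                * ((u + a + b) / (T + a + b)) * ((u + a - b) / (T + a - b)))"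
    by (subst hyp_term_Cons_left)
       (simp only: hyp_term_Cons_Cons hyp_term_Nil_Nil upper_ratios lower_ratios power_one, simp only: mult_ac)
qed

lemma hyp_term_8F7_eq:
  fixes v a b c s :: complex
  assumes c: "c \<noteq> 0" and s: "s\<^sup>2 = a\<^sup>2 + b\<^sup>2"
    and w: "v * c - a - b \<noteq> 0" "v * c - a + b \<noteq> 0" "v * c + a + b \<noteq> 0" "v * c + a - b \<noteq> 0"
    and h: "v/2 \<notin> \<int>\<^sub>\<le>\<^sub>0"
    and l: "v/2 - s/(2*c) \<notin> \<int>\<^sub>\<le>\<^sub>0" "v/2 + s/(2*c) \<notin> \<int>\<^sub>\<le>\<^sub>0"
    and \<sigma>: "1 + (v/2 - a/(2*c) - b/(2*c)) \<notin> \<int>\<^sub>\<le>\<^sub>0" "1 + (v/2 - a/(2*c) + b/(2*c)) \<notin> \<int>\<^sub>\<le>\<^sub>0"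
      "1 + (v/2 + a/(2*c) + b/(2*c)) \<notin> \<int>\<^sub>\<le>\<^sub>0" "1 + (v/2 + a/(2*c) - b/(2*c)) \<notin> \<int>\<^sub>\<le>\<^sub>0"
  defines "D \<equiv> \<lambda>n. 1 / (2 * c * of_nat n + (v * c - a - b)) + 1 / (2 * c * of_nat n + (v * c - a + b))
                  + 1 / (2 * c * of_nat n + (v * c + a + b)) + 1 / (2 * c * of_nat n + (v * c + a - b))"
    and "N \<equiv> v^3 * c^3 - a\<^sup>2 * v * c - b\<^sup>2 * v * c"
  shows "N \<noteq> 0"
    and "hyp_term
           [v, 1 + v/2, 1 + (v/2 - s/(2*c)), 1 + (v/2 + s/(2*c)),
            v/2 - a/(2*c) - b/(2*c), v/2 - a/(2*c) + b/(2*c), v/2 + a/(2*c) + b/(2*c), v/2 + a/(2*c) - b/(2*c)]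
           [v/2, v/2 - s/(2*c), v/2 + s/(2*c),
            1 + (v/2 - a/(2*c) - b/(2*c)), 1 + (v/2 - a/(2*c) + b/(2*c)),
            1 + (v/2 + a/(2*c) + b/(2*c)), 1 + (v/2 + a/(2*c) - b/(2*c))] 1
         = (\<lambda>n. (v * c - a - b) * (v * c + a + b) * (v * c - a + b) * (v * c + a - b) / (4 * N)
                  * (pochhammer v n / fact n * D n))"
proof -
  have "v/2 \<noteq> 0" "v/2 - s/(2*c) \<noteq> 0" "v/2 + s/(2*c) \<noteq> 0"
    using h l by auto
  then have nonzero: "v * c \<noteq> 0" "v * c - s \<noteq> 0" "v * c + s \<noteq> 0"
    using c by (auto simp: field_simps)
  have N_eq: "N = v * c * ((v * c)\<^sup>2 - s\<^sup>2)"
    unfolding N_def s by (simp add: power2_eq_square power3_eq_cube algebra_simps)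
  also have "\<dots> = v * c * ((v * c - s) * (v * c + s))"
    by (simp add: power2_eq_square algebra_simps)
  finally show "N \<noteq> 0"
    using nonzero by simp
  show "hyp_term
           [v, 1 + v/2, 1 + (v/2 - s/(2*c)), 1 + (v/2 + s/(2*c)),
            v/2 - a/(2*c) - b/(2*c), v/2 - a/(2*c) + b/(2*c), v/2 + a/(2*c) + b/(2*c), v/2 + a/(2*c) - b/(2*c)]
           [v/2, v/2 - s/(2*c), v/2 + s/(2*c),
            1 + (v/2 - a/(2*c) - b/(2*c)), 1 + (v/2 - a/(2*c) + b/(2*c)),
            1 + (v/2 + a/(2*c) + b/(2*c)), 1 + (v/2 + a/(2*c) - b/(2*c))] 1
         = (\<lambda>n. (v * c - a - b) * (v * c + a + b) * (v * c - a + b) * (v * c + a - b) / (4 * N)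
                  * (pochhammer v n / fact n * D n))"
  proof
    fix n
    define T where "T = 2 * c * of_nat n + v * c"
    note ratio_form = hyp_term_8F7_ratio_form[OF c w h l \<sigma>, where n = n, folded T_def]
    have "D n = 1 / (T - a - b) + 1 / (T - a + b) + 1 / (T + a + b) + 1 / (T + a - b)"
      by (simp add: D_def T_def algebra_simps)
    then show "hyp_term
           [v, 1 + v/2, 1 + (v/2 - s/(2*c)), 1 + (v/2 + s/(2*c)),
            v/2 - a/(2*c) - b/(2*c), v/2 - a/(2*c) + b/(2*c), v/2 + a/(2*c) + b/(2*c), v/2 + a/(2*c) - b/(2*c)]
           [v/2, v/2 - s/(2*c), v/2 + s/(2*c),
            1 + (v/2 - a/(2*c) - b/(2*c)), 1 + (v/2 - a/(2*c) + b/(2*c)),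
            1 + (v/2 + a/(2*c) + b/(2*c)), 1 + (v/2 + a/(2*c) - b/(2*c))] 1 n
         = (v * c - a - b) * (v * c + a + b) * (v * c - a + b) * (v * c + a - b) / (4 * N)
             * (pochhammer v n / fact n * D n)"
      unfolding ratio_form(5) shifted_ratio_product_eq[OF s nonzero ratio_form(1-4)] N_eq
      by (simp add: mult_ac)
  qed
qed

theorem mainTheorem18:
  fixes v a b c s :: complex
  assumes "Re v < 1" and "Re c > 0"
    and "Re (v *c + a + b) > 0" and "Re (v *c + a - b) > 0"
    and "Re (v *c - a + b) > 0" and "Re (v *c - a - b) > 0"
    and "s\<^sup>2 = a\<^sup>2 + b\<^sup>2"
    and "v/2 \<notin> \<int>\<^sub>\<le>\<^sub>0"
    and "v/2 - s/(2*c) \<notin> \<int>\<^sub>\<le>\<^sub>0"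
    and "v/2 + s/(2*c) \<notin> \<int>\<^sub>\<le>\<^sub>0"
    and "1 + (v/2 - a/(2*c) - b/(2*c)) \<notin> \<int>\<^sub>\<le>\<^sub>0"
    and "1 + (v/2 - a/(2*c) + b/(2*c)) \<notin> \<int>\<^sub>\<le>\<^sub>0"
    and "1 + (v/2 + a/(2*c) + b/(2*c)) \<notin> \<int>\<^sub>\<le>\<^sub>0"
    and "1 + (v/2 + a/(2*c) - b/(2*c)) \<notin> \<int>\<^sub>\<le>\<^sub>0"
  shows "let l1 = v/2 - s/(2*c); l2 = v/2 + s/(2*c);
             s3 = v/2 - a/(2*c) - b/(2*c); s4 = v/2 - a/(2*c) + b/(2*c);
             s5 = v/2 + a/(2*c) + b/(2*c); s6 = v/2 + a/(2*c) - b/(2*c);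
             P = (v *c - a - b) * (v *c + a + b) * (v *c - a + b) * (v *c + a - b);
             as = [v, 1 + v/2, 1 + l1, 1 + l2, s3, s4, s5, s6];
             bs = [v/2, l1, l2, 1 + s3, 1 + s4, 1 + s5, 1 + s6]
         in summable (hyp_term as bs 1) \<and>
            ((\<lambda>x::real. cosh (a * of_real x) * cosh (b * of_real x) / sinh_pow v c x)
               has_integral
               ((2::complex) powr v * (v^3 * c^3 - a\<^sup>2 * v * c - b\<^sup>2 * v * c) / P * hypergeomF as bs 1))
              {0<..}"
proof -
  have c: "c \<noteq> 0"
    using assms(2) by auto
  have w: "v * c - a - b \<noteq> 0" "v * c - a + b \<noteq> 0" "v * c + a + b \<noteq> 0" "v * c + a - b \<noteq> 0"
    using assms(6,5,3,4) by (metis zero_complex.sel(1) less_irrefl)+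
  define D where "D = (\<lambda>n. 1 / (2 * c * of_nat n + (v * c - a - b)) + 1 / (2 * c * of_nat n + (v * c - a + b))
    + 1 / (2 * c * of_nat n + (v * c + a + b)) + 1 / (2 * c * of_nat n + (v * c + a - b)))"
  define P where "P = (v * c - a - b) * (v * c + a + b) * (v * c - a + b) * (v * c + a - b)"
  define N where "N = v^3 * c^3 - a\<^sup>2 * v * c - b\<^sup>2 * v * c"
  obtain summable: "summable (\<lambda>n. pochhammer v n / fact n * D n)"
    and integral: "((\<lambda>x::real. cosh (a * of_real x) * cosh (b * of_real x) / sinh_pow v c x)
                    has_integral 2 powr v / 4 * (\<Sum>n. pochhammer v n / fact n * D n)) {0<..}"
    using has_integral_cosh_mult_cosh_div_sinh_pow[OF assms(1,2) assms(6,5,3,4)] unfolding D_def by blast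
  obtain "N \<noteq> 0" and terms: "hyp_term
      [v, 1 + v/2, 1 + (v/2 - s/(2*c)), 1 + (v/2 + s/(2*c)),
       v/2 - a/(2*c) - b/(2*c), v/2 - a/(2*c) + b/(2*c), v/2 + a/(2*c) + b/(2*c), v/2 + a/(2*c) - b/(2*c)]
      [v/2, v/2 - s/(2*c), v/2 + s/(2*c),
       1 + (v/2 - a/(2*c) - b/(2*c)), 1 + (v/2 - a/(2*c) + b/(2*c)),
       1 + (v/2 + a/(2*c) + b/(2*c)), 1 + (v/2 + a/(2*c) - b/(2*c))] 1
    = (\<lambda>n. P / (4 * N) * (pochhammer v n / fact n * D n))"
    using hyp_term_8F7_eq[OF c assms(7) w assms(8-14)] unfolding D_def N_def P_def by blast
  moreover have "P \<noteq> 0"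
    using w by (simp add: P_def)
  ultimately have rhs_eq: "2 powr v * N / P * (\<Sum>n. P / (4 * N) * (pochhammer v n / fact n * D n))
      = 2 powr v / 4 * (\<Sum>n. pochhammer v n / fact n * D n)"
    unfolding suminf_mult[OF summable] by simp
  show ?thesis
    unfolding Let_def terms hypergeomF_def P_def[symmetric] N_def[symmetric] rhs_eq
    using summable_mult[OF summable] integral by blast
qed

end
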